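(* Consider the system $$\dot S_p=b_p-\Big(\sum_{q=1}^P\sum_{v=1}^V\beta_{pqv}I_{qv}+d_p\Big)S_p,\quad \dot L_{pv}=\sum_{q=1}^P\beta_{pqv}I_{qv}S_p-(\varepsilon_{pv}+d_p)L_{pv},$$ $$\dot I_{pv}=\varepsilon_{pv}L_{pv}-(\gamma_{pv}+d_p)I_{pv},\quad \dot R_p=\sum_{v=1}^V\gamma_{pv}I_{pv}-d_pR_p,$$ for $p=1,\dots,P$, $v=1,\dots,V$. If $\mathcal R_0<1$, then the disease-free equilibrium $E_0$ ($S_p=b_p/d_p$ for all $p$, all $L_{pv},I_{pv},R_p$ equal to $0$) is globally asymptotically stable in $$\Omega=\Big\{(S_p,L_{pv},I_{pv},R_p)\in\mathbb R_{\ge0}^{2P(V+1)}:\ N_p:=S_p+\sum_{v=1}^V(L_{pv}+I_{pv})+R_p\le \frac{b_p}{d_p},\ p=1,\dots,P\Big\}.$$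
   Context: Parameters: $b_p>0$, $d_p>0$, $\varepsilon_{pv}>0$, $\gamma_{pv}>0$, $\beta_{pqv}\ge0$. Let $S_p^0=b_p/d_p$. For each pathogen $v$, let $\mathcal B_v$ be the $P\times P$ matrix with entries $(\mathcal B_v)_{pq}=\dfrac{\beta_{pqv}\varepsilon_{qv}S_p^0}{(\varepsilon_{qv}+d_q)(\gamma_{qv}+d_q)}$, $\mathcal R_0^v=\rho(\mathcal B_v)$ (spectral radius), and $\mathcal R_0=\max_{v}\mathcal R_0^v$. *)

theory Defs
  imports "HOL-Analysis.Analysis" "Jordan_Normal_Form.Spectral_Radius"
begin

text \<open>Indices: hosts p \<in> {0..<P}, pathogens v \<in> {0..<V}.\<close>

definition S0 :: "(nat \<Rightarrow> real) \<Rightarrow> (nat \<Rightarrow> real) \<Rightarrow> nat \<Rightarrow> real" where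
  "S0 b d p = b p / d p"

definition Bmat :: "nat \<Rightarrow> (nat \<Rightarrow> real) \<Rightarrow> (nat \<Rightarrow> real) \<Rightarrow> (nat \<Rightarrow> nat \<Rightarrow> real)
    \<Rightarrow> (nat \<Rightarrow> nat \<Rightarrow> real) \<Rightarrow> (nat \<Rightarrow> nat \<Rightarrow> nat \<Rightarrow> real) \<Rightarrow> nat \<Rightarrow> complex mat" where
  "Bmat P b d eps gam beta v = mat P P (\<lambda>(p,q). complex_of_real
     (beta p q v * eps q v * S0 b d p / ((eps q v + d q) * (gam q v + d q))))"

definition R0v where
  "R0v P b d eps gam beta v = spectral_radius (Bmat P b d eps gam beta v)"

definition R0 where
  "R0 P V b d eps gam beta = Max ((\<lambda>v. R0v P b d eps gam beta v) ` {..<V})"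

definition is_solution ::
  "nat \<Rightarrow> nat \<Rightarrow> (nat \<Rightarrow> real) \<Rightarrow> (nat \<Rightarrow> real) \<Rightarrow> (nat \<Rightarrow> nat \<Rightarrow> real)
    \<Rightarrow> (nat \<Rightarrow> nat \<Rightarrow> real) \<Rightarrow> (nat \<Rightarrow> nat \<Rightarrow> nat \<Rightarrow> real)
    \<Rightarrow> (real \<Rightarrow> nat \<Rightarrow> real) \<Rightarrow> (real \<Rightarrow> nat \<Rightarrow> nat \<Rightarrow> real)
    \<Rightarrow> (real \<Rightarrow> nat \<Rightarrow> nat \<Rightarrow> real) \<Rightarrow> (real \<Rightarrow> nat \<Rightarrow> real) \<Rightarrow> bool" where
  "is_solution P V b d eps gam beta S L I R \<longleftrightarrow>
    (\<forall>t\<ge>0. \<forall>p<P.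
      ((\<lambda>\<tau>. S \<tau> p) has_real_derivative
         (b p - ((\<Sum>q<P. \<Sum>v<V. beta p q v * I t q v) + d p) * S t p)) (at t within {0..}) \<and>
      ((\<lambda>\<tau>. R \<tau> p) has_real_derivative
         ((\<Sum>v<V. gam p v * I t p v) - d p * R t p)) (at t within {0..}) \<and>
      (\<forall>v<V.
        ((\<lambda>\<tau>. L \<tau> p v) has_real_derivative
           ((\<Sum>q<P. beta p q v * I t q v) * S t p - (eps p v + d p) * L t p v)) (at t within {0..}) \<and>
        ((\<lambda>\<tau>. I \<tau> p v) has_real_derivative
           (eps p v * L t p v - (gam p v + d p) * I t p v)) (at t within {0..})))"

definition in_Omega ::
  "nat \<Rightarrow> nat \<Rightarrow> (nat \<Rightarrow> real) \<Rightarrow> (nat \<Rightarrow> real)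
    \<Rightarrow> (nat \<Rightarrow> real) \<Rightarrow> (nat \<Rightarrow> nat \<Rightarrow> real) \<Rightarrow> (nat \<Rightarrow> nat \<Rightarrow> real) \<Rightarrow> (nat \<Rightarrow> real) \<Rightarrow> bool" where
  "in_Omega P V b d s l i r \<longleftrightarrow>
    (\<forall>p<P. s p \<ge> 0 \<and> r p \<ge> 0 \<and> (\<forall>v<V. l p v \<ge> 0 \<and> i p v \<ge> 0) \<and>
       s p + (\<Sum>v<V. l p v + i p v) + r p \<le> b p / d p)"

definition dist_E0 ::
  "nat \<Rightarrow> nat \<Rightarrow> (nat \<Rightarrow> real) \<Rightarrow> (nat \<Rightarrow> real)
    \<Rightarrow> (nat \<Rightarrow> real) \<Rightarrow> (nat \<Rightarrow> nat \<Rightarrow> real) \<Rightarrow> (nat \<Rightarrow> nat \<Rightarrow> real) \<Rightarrow> (nat \<Rightarrow> real) \<Rightarrow> real" where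
  "dist_E0 P V b d s l i r =
    (\<Sum>p<P. \<bar>s p - S0 b d p\<bar> + (\<Sum>v<V. \<bar>l p v\<bar> + \<bar>i p v\<bar>) + \<bar>r p\<bar>)"

definition E0_GAS_in_Omega where
  "E0_GAS_in_Omega P V b d eps gam beta \<longleftrightarrow>
    (\<forall>\<epsilon>>0. \<exists>\<delta>>0. \<forall>S L I R.
        is_solution P V b d eps gam beta S L I R \<longrightarrow>
        in_Omega P V b d (S 0) (L 0) (I 0) (R 0) \<longrightarrow>
        dist_E0 P V b d (S 0) (L 0) (I 0) (R 0) < \<delta> \<longrightarrow>
        (\<forall>t\<ge>0. dist_E0 P V b d (S t) (L t) (I t) (R t) < \<epsilon>)) \<and>
    (\<forall>S L I R.
        is_solution P V b d eps gam beta S L I R \<longrightarrow>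
        in_Omega P V b d (S 0) (L 0) (I 0) (R 0) \<longrightarrow>
        ((\<lambda>t. dist_E0 P V b d (S t) (L t) (I t) (R t)) \<longlongrightarrow> 0) at_top)"

end

theory Submission
  imports Defs "HOL-Real_Asymp.Real_Asymp"
begin

text \<open>
  The total population \<open>N\<^sub>p\<close> of host \<open>p\<close> obeys \<open>N\<^sub>p' = b\<^sub>p - d\<^sub>p N\<^sub>p\<close>, so it stays
  below \<open>S\<^sub>p\<^sup>0\<close> on \<open>\<Omega>\<close>, and the nonnegative orthant is invariant because the system is
  cooperative. Since \<open>\<rho>(\<B>\<^sub>v) < 1\<close>, a truncated Neumann series gives a positive row vector
  \<open>w\<close> with \<open>w \<B>\<^sub>v < w\<close>; from it one builds positive weights \<open>x, y\<close> such that
  \<open>\<Sum>\<^sub>p x\<^sub>p L\<^sub>p\<^sub>v + y\<^sub>p I\<^sub>p\<^sub>v\<close> decays exponentially as long as \<open>S \<le> S\<^sup>0\<close>. Adding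
  \<open>\<Sum>\<^sub>p (S\<^sub>p\<^sup>0 - N\<^sub>p) + \<Sum>\<^sub>p R\<^sub>p\<close> yields a Lyapunov function which is comparable to the
  \<open>\<ell>\<^sup>1\<close>-distance from \<open>E\<^sub>0\<close> on \<open>\<Omega>\<close> and decays exponentially; this gives both
  stability and attractivity.
\<close>

section \<open>Differential inequalities and invariance of the orthant\<close>

lemma exp_decay_of_deriv_le:
  fixes f f' :: "real \<Rightarrow> real"
  assumes der: "\<And>t. 0 \<le> t \<Longrightarrow> (f has_real_derivative f' t) (at t within {0..})"
    and le: "\<And>t. 0 \<le> t \<Longrightarrow> t \<le> T \<Longrightarrow> f' t \<le> - k * f t"
    and t: "0 \<le> t" "t \<le> T"
  shows "f t \<le> f 0 * exp (- k * t)"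
proof -
  define g where "g x = f x * exp (k * x)" for x
  have dg: "(g has_real_derivative (f' x + k * f x) * exp (k * x)) (at x within {0..})"
    if "0 \<le> x" for x
    unfolding g_def by (rule derivative_eq_intros der[OF that] refl | simp add: algebra_simps)+
  have "g t \<le> g 0"
  proof (rule DERIV_nonpos_imp_decreasing_open[OF t(1)])
    fix x assume x: "0 < x" "x < t"
    have "at x within {0..} = at x"
      using x by (intro at_within_interior) auto
    with dg[of x] x have "DERIV g x :> (f' x + k * f x) * exp (k * x)" by auto
    moreover have "(f' x + k * f x) * exp (k * x) \<le> 0"
      using le[of x] x t by (intro mult_nonpos_nonneg) auto
    ultimately show "\<exists>y. DERIV g x :> y \<and> y \<le> 0" by blast
  next
    have "continuous_on {0..} g"
      using dg by (auto simp: continuous_on_eq_continuous_within intro: DERIV_continuous)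
    then show "continuous_on {0..t} g" by (rule continuous_on_subset) auto
  qed
  then have "f t * exp (k * t) * exp (- k * t) \<le> f 0 * exp (- k * t)"
    unfolding g_def by (intro mult_right_mono) auto
  then show ?thesis by (simp add: mult.assoc flip: exp_add)
qed

lemma has_real_derivative_min_0_power2:
  "((\<lambda>x. (min 0 x)\<^sup>2) has_real_derivative 2 * min 0 x) (at x)"
proof (cases x "0::real" rule: linorder_cases)
  case less
  have "\<forall>\<^sub>F y in nhds x. y\<^sup>2 = (min 0 y)\<^sup>2"
    using eventually_nhds_in_open[of "{..<0}" x] less by (auto elim!: eventually_mono)
  moreover have "((\<lambda>y. y\<^sup>2) has_real_derivative 2 * x) (at x)"
    by (rule derivative_eq_intros refl | simp)+
  ultimately show ?thesis
    using less by (simp add: DERIV_cong_ev)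
next
  case equal
  have "((\<lambda>h. ((min 0 h)\<^sup>2 - (min 0 0)\<^sup>2) / h) \<longlongrightarrow> 0) (at (0::real))"
  proof (rule tendsto_sandwich[where f = "\<lambda>h. - \<bar>h\<bar>" and h = "\<lambda>h. \<bar>h\<bar>"])
    show "\<forall>\<^sub>F h in at (0::real). - \<bar>h\<bar> \<le> ((min 0 h)\<^sup>2 - (min 0 0)\<^sup>2) / h"
      by (intro always_eventually allI) (auto simp: min_def power2_eq_square)
    show "\<forall>\<^sub>F h in at (0::real). ((min 0 h)\<^sup>2 - (min 0 0)\<^sup>2) / h \<le> \<bar>h\<bar>"
      by (intro always_eventually allI) (auto simp: min_def power2_eq_square)
  qed (auto intro!: tendsto_eq_intros)
  then show ?thesis
    using equal by (simp add: DERIV_def)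
next
  case greater
  have "\<forall>\<^sub>F y in nhds x. 0 = (min 0 y)\<^sup>2"
    using eventually_nhds_in_open[of "{0<..}" x] greater by (auto elim!: eventually_mono)
  then have "((\<lambda>y. (min 0 y)\<^sup>2) has_real_derivative 0) (at x)"
    by (rule DERIV_cong_ev[OF refl _ refl, THEN iffD1]) simp
  then show ?thesis
    using greater by simp
qed

lemma nonneg_of_deriv_ge_neg_part:
  fixes z z' :: "'a \<Rightarrow> real \<Rightarrow> real"
  assumes fin: "finite J"
    and der: "\<And>j t. j \<in> J \<Longrightarrow> 0 \<le> t \<Longrightarrow> (z j has_real_derivative z' j t) (at t within {0..})"
    and init: "\<And>j. j \<in> J \<Longrightarrow> 0 \<le> z j 0"
    and C: "0 \<le> C"
    and ge: "\<And>j s. j \<in> J \<Longrightarrow> 0 \<le> s \<Longrightarrow> s \<le> t \<Longrightarrow> z j s < 0 \<Longrightarrow>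
               C * (\<Sum>i\<in>J. min 0 (z i s)) \<le> z' j s"
    and j: "j \<in> J" and t: "0 \<le> t"
  shows "0 \<le> z j t"
proof -
  define u where "u s = (\<Sum>i\<in>J. (min 0 (z i s))\<^sup>2)" for s
  define u' where "u' s = (\<Sum>i\<in>J. 2 * min 0 (z i s) * z' i s)" for s
  have du: "(u has_real_derivative u' s) (at s within {0..})" if "0 \<le> s" for s
    unfolding u_def u'_def
    by (intro DERIV_sum DERIV_chain2[OF has_real_derivative_min_0_power2 der] that)
  \<comment> \<open>\<open>u\<close> is the squared distance to the orthant; Cauchy-Schwarz bounds its growth rate\<close>
  have "u' s \<le> 2 * C * card J * u s" if s: "0 \<le> s" "s \<le> t" for s
  proof -
    define m where "m i = - min 0 (z i s)" for i
    have summand: "2 * min 0 (z i s) * z' i s \<le> 2 * C * (m i * (\<Sum>k\<in>J. m k))" if "i \<in> J" for i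
    proof (cases "z i s < 0")
      case True
      then have "- C * (\<Sum>k\<in>J. m k) \<le> z' i s"
        using ge[OF that s True] by (simp add: m_def sum_negf)
      from mult_left_mono_neg[OF this, of "2 * min 0 (z i s)"] True
      show ?thesis by (simp add: m_def algebra_simps)
    qed (simp add: m_def)
    have "u' s \<le> (\<Sum>i\<in>J. 2 * C * (m i * (\<Sum>k\<in>J. m k)))"
      unfolding u'_def by (intro sum_mono summand)
    also have "\<dots> = 2 * C * (\<Sum>i\<in>J. m i)\<^sup>2"
      by (simp add: power2_eq_square flip: sum_distrib_left sum_distrib_right)
    also have "\<dots> \<le> 2 * C * (card J * (\<Sum>i\<in>J. (m i)\<^sup>2))"
      using C sum_squared_le_sum_of_squares[of m J] by (intro mult_left_mono) (auto simp: mult.commute)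
    finally show ?thesis
      by (simp add: u_def m_def)
  qed
  then have "u t \<le> u 0 * exp (- (- 2 * C * card J) * t)"
    by (intro exp_decay_of_deriv_le[OF du]) (use t in auto)
  also have "u 0 = 0"
    using init by (simp add: u_def)
  finally have "u t \<le> 0"
    by simp
  moreover have "(min 0 (z j t))\<^sup>2 \<le> u t"
    unfolding u_def using fin j by (intro member_le_sum) auto
  ultimately have "(min 0 (z j t))\<^sup>2 \<le> 0"
    by linarith
  then show ?thesis
    by simp
qed

lemma cooperative_system_nonneg:
  fixes z z' :: "'a \<Rightarrow> real \<Rightarrow> real" and a :: "'a \<Rightarrow> 'a \<Rightarrow> real \<Rightarrow> real"
  assumes fin: "finite J"
    and der: "\<And>j t. j \<in> J \<Longrightarrow> 0 \<le> t \<Longrightarrow> (z j has_real_derivative z' j t) (at t within {0..})"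
    and init: "\<And>j. j \<in> J \<Longrightarrow> 0 \<le> z j 0"
    and cont: "\<And>i j. i \<in> J \<Longrightarrow> j \<in> J \<Longrightarrow> continuous_on {0..} (a j i)"
    and off_diag: "\<And>i j t. i \<in> J \<Longrightarrow> j \<in> J \<Longrightarrow> i \<noteq> j \<Longrightarrow> 0 \<le> t \<Longrightarrow> 0 \<le> a j i t"
    and ge: "\<And>j t. j \<in> J \<Longrightarrow> 0 \<le> t \<Longrightarrow> (\<Sum>i\<in>J. a j i t * z i t) \<le> z' j t"
    and j: "j \<in> J" and t: "0 \<le> t"
  shows "0 \<le> z j t"
proof -
  have "continuous_on {0..} (\<lambda>s. \<Sum>j\<in>J. \<Sum>i\<in>J. \<bar>a j i s\<bar>)"
    using cont by (intro continuous_intros) auto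
  then have "continuous_on {0..t} (\<lambda>s. \<Sum>j\<in>J. \<Sum>i\<in>J. \<bar>a j i s\<bar>)"
    by (rule continuous_on_subset) auto
  then obtain C where C: "0 \<le> C" "\<And>s. s \<in> {0..t} \<Longrightarrow> norm (\<Sum>j\<in>J. \<Sum>i\<in>J. \<bar>a j i s\<bar>) \<le> C"
    using continuous_on_compact_bound[of "{0..t}"] by blast
  have a_le: "\<bar>a j i s\<bar> \<le> C" if "i \<in> J" "j \<in> J" "s \<in> {0..t}" for i j s
  proof -
    have "\<bar>a j i s\<bar> \<le> (\<Sum>i\<in>J. \<bar>a j i s\<bar>)"
      using fin that by (intro member_le_sum) auto
    also have "\<dots> \<le> (\<Sum>j\<in>J. \<Sum>i\<in>J. \<bar>a j i s\<bar>)"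
      using fin that by (intro member_le_sum sum_nonneg) auto
    finally show ?thesis
      using C(2)[OF that(3)] by simp
  qed
  show ?thesis
  proof (rule nonneg_of_deriv_ge_neg_part[OF fin der init C(1) _ j t])
    fix k s assume ks: "k \<in> J" "0 \<le> s" "s \<le> t" and neg: "z k s < 0"
    have "C * min 0 (z i s) \<le> a k i s * z i s" if i: "i \<in> J" for i
    proof (cases "i = k")
      case True
      then show ?thesis
        using a_le[OF i ks(1)] ks neg by (simp add: abs_le_iff mult_right_mono_neg)
    next
      case False
      have "C * min 0 (z i s) \<le> a k i s * min 0 (z i s)"
        using a_le[OF i ks(1)] ks by (intro mult_right_mono_neg) (auto simp: abs_le_iff)
      also have "\<dots> \<le> a k i s * z i s"
        using off_diag[OF i ks(1) False ks(2)] by (intro mult_left_mono) auto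
      finally show ?thesis .
    qed
    then have "C * (\<Sum>i\<in>J. min 0 (z i s)) \<le> (\<Sum>i\<in>J. a k i s * z i s)"
      by (simp add: sum_distrib_left sum_mono)
    with ge[OF ks(1,2)] show "C * (\<Sum>i\<in>J. min 0 (z i s)) \<le> z' k s"
      by linarith
  qed
qed

section \<open>Nonnegative matrices of spectral radius below one\<close>

fun fun_mat_pow :: "nat \<Rightarrow> (nat \<Rightarrow> nat \<Rightarrow> real) \<Rightarrow> nat \<Rightarrow> nat \<Rightarrow> nat \<Rightarrow> real" where
  "fun_mat_pow n B 0 i j = (if i = j then 1 else 0)"
| "fun_mat_pow n B (Suc k) i j = (\<Sum>l<n. fun_mat_pow n B k i l * B l j)"

lemma mat_pow_of_real_index:
  assumes "i < n" "j < n"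
  shows "(mat n n (\<lambda>(p, q). complex_of_real (B p q)) ^\<^sub>m k) $$ (i, j) = complex_of_real (fun_mat_pow n B k i j)"
  using assms(2)
proof (induction k arbitrary: j)
  case (Suc k)
  let ?A = "mat n n (\<lambda>(p, q). complex_of_real (B p q))"
  have "(?A ^\<^sub>m Suc k) $$ (i, j) = (\<Sum>l = 0..<n. (?A ^\<^sub>m k) $$ (i, l) * ?A $$ (l, j))"
    using assms(1) Suc.prems by (simp add: scalar_prod_def)
  also have "\<dots> = (\<Sum>l<n. complex_of_real (fun_mat_pow n B k i l * B l j))"
    using Suc by (auto simp: atLeast0LessThan intro: sum.cong)
  finally show ?case
    by simp
qed (use assms in simp)

lemma fun_mat_pow_scale: "fun_mat_pow n (\<lambda>i j. c * B i j) k i j = c ^ k * fun_mat_pow n B k i j"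
  by (induction k arbitrary: j) (auto simp: sum_distrib_left algebra_simps)

lemma fun_mat_pow_nonneg:
  "(\<And>i j. i < n \<Longrightarrow> j < n \<Longrightarrow> 0 \<le> B i j) \<Longrightarrow> j < n \<Longrightarrow> 0 \<le> fun_mat_pow n B k i j"
  by (induction k arbitrary: j) (auto intro!: sum_nonneg)

lemma spectral_radius_divide_lt_1:
  assumes n: "0 < n" and r: "0 < r"
    and sr: "spectral_radius (mat n n (\<lambda>(p, q). complex_of_real (B p q))) < r"
  shows "spectral_radius (mat n n (\<lambda>(p, q). complex_of_real (B p q / r))) < 1"
proof -
  let ?A = "mat n n (\<lambda>(p, q). complex_of_real (B p q))"
  let ?A' = "mat n n (\<lambda>(p, q). complex_of_real (B p q / r))"
  obtain ev where ev: "ev \<in> spectrum ?A'" "spectral_radius ?A' = norm ev"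
    using spectral_radius_mem_max(1)[of ?A' n] n by auto
  then obtain v where v: "v \<in> carrier_vec n" "v \<noteq> 0\<^sub>v n" "?A' *\<^sub>v v = ev \<cdot>\<^sub>v v"
    unfolding spectrum_def eigenvalue_def eigenvector_def by auto
  have "?A *\<^sub>v v = (r * ev) \<cdot>\<^sub>v v"
  proof (rule eq_vecI)
    fix i assume "i < dim_vec ((r * ev) \<cdot>\<^sub>v v)"
    then have i: "i < n"
      using v(1) by simp
    have "(?A *\<^sub>v v) $ i = r * ((?A' *\<^sub>v v) $ i)"
      using i v(1) r by (simp add: scalar_prod_def sum_distrib_left mult.assoc)
    also have "(?A' *\<^sub>v v) $ i = ev * v $ i"
      using arg_cong[OF v(3), of "\<lambda>w. w $ i"] i v(1) by simp
    finally show "(?A *\<^sub>v v) $ i = ((r * ev) \<cdot>\<^sub>v v) $ i"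
      using i v(1) by simp
  qed (use v in simp)
  then have "r * ev \<in> spectrum ?A"
    using v unfolding spectrum_def eigenvalue_def eigenvector_def by auto
  then have "norm (r * ev) < r"
    using spectral_radius_mem_max(2)[of ?A n] n sr by fastforce
  then show ?thesis
    using ev(2) r by (simp add: norm_mult)
qed

lemma fun_mat_pow_geometric_bound:
  assumes n: "0 < n" and sr: "spectral_radius (mat n n (\<lambda>(p, q). complex_of_real (B p q))) < 1"
  obtains r c where "0 < r" "r < 1" "\<And>k i j. i < n \<Longrightarrow> j < n \<Longrightarrow> fun_mat_pow n B k i j \<le> r ^ k * c"
proof -
  define \<rho> where "\<rho> = spectral_radius (mat n n (\<lambda>(p, q). complex_of_real (B p q)))"
  have "\<rho> \<in> norm ` spectrum (mat n n (\<lambda>(p, q). complex_of_real (B p q)))"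
    unfolding \<rho>_def by (rule spectral_radius_mem_max(1)[OF mat_carrier n])
  then have "0 \<le> \<rho>"
    by auto
  define r where "r = (\<rho> + 1) / 2"
  have r: "0 < r" "r < 1" "\<rho> < r"
    using \<open>0 \<le> \<rho>\<close> sr unfolding r_def \<rho>_def by auto
  have "spectral_radius (mat n n (\<lambda>(p, q). complex_of_real (B p q / r))) < 1"
    using spectral_radius_divide_lt_1[OF n r(1)] r(3) unfolding \<rho>_def by blast
  then obtain c where c: "\<And>k. norm_bound (mat n n (\<lambda>(p, q). complex_of_real (B p q / r)) ^\<^sub>m k) c"
    using spectral_radius_jnf_norm_bound_less_1_upper_triangular[OF mat_carrier] by blast
  have "fun_mat_pow n B k i j \<le> r ^ k * c" if "i < n" "j < n" for k i j
  proof -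
    have "fun_mat_pow n B k i j = r ^ k * fun_mat_pow n (\<lambda>p q. B p q / r) k i j"
      using fun_mat_pow_scale[of n r "\<lambda>p q. B p q / r"] r(1) by simp
    moreover have "norm ((mat n n (\<lambda>(p, q). complex_of_real (B p q / r)) ^\<^sub>m k) $$ (i, j)) \<le> c"
      using c[of k] that unfolding norm_bound_def by simp
    then have "fun_mat_pow n (\<lambda>p q. B p q / r) k i j \<le> c"
      using mat_pow_of_real_index[OF that, of "\<lambda>p q. B p q / r" k] by simp
    ultimately show ?thesis
      using r(1) by (simp add: mult_left_mono)
  qed
  with r that show ?thesis
    by blast
qed

lemma fun_mat_pow_column_sum_lt_1:
  assumes n: "0 < n" and sr: "spectral_radius (mat n n (\<lambda>(p, q). complex_of_real (B p q))) < 1"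
  obtains K where "\<And>q. q < n \<Longrightarrow> (\<Sum>p<n. fun_mat_pow n B K p q) < 1"
proof -
  obtain r c where r: "0 < r" "r < 1" and bound: "\<And>k i j. i < n \<Longrightarrow> j < n \<Longrightarrow> fun_mat_pow n B k i j \<le> r ^ k * c"
    using fun_mat_pow_geometric_bound[OF n sr] by blast
  have e: "0 < n * \<bar>c\<bar> + 1"
    by (intro add_nonneg_pos) auto
  then obtain K where K: "r ^ K < 1 / (n * \<bar>c\<bar> + 1)"
    using real_arch_pow_inv[OF _ r(2), of "1 / (n * \<bar>c\<bar> + 1)"] e by auto
  have "(\<Sum>p<n. fun_mat_pow n B K p q) < 1" if "q < n" for q
  proof -
    have "(\<Sum>p<n. fun_mat_pow n B K p q) \<le> (\<Sum>p<n. r ^ K * \<bar>c\<bar>)"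
      using that r by (intro sum_mono order_trans[OF bound] mult_left_mono) auto
    also have "\<dots> \<le> r ^ K * (n * \<bar>c\<bar> + 1)"
      using r by (simp add: algebra_simps)
    also have "\<dots> < 1"
      using K pos_less_divide_eq[OF e] by simp
    finally show ?thesis .
  qed
  then show ?thesis
    using that by blast
qed

lemma subinvariant_weight_of_spectral_radius_lt_1:
  assumes n: "0 < n" and nonneg: "\<And>i j. i < n \<Longrightarrow> j < n \<Longrightarrow> 0 \<le> B i j"
    and sr: "spectral_radius (mat n n (\<lambda>(p, q). complex_of_real (B p q))) < 1"
  shows "\<exists>w. (\<forall>q<n. 1 \<le> w q) \<and> (\<forall>q<n. (\<Sum>p<n. w p * B p q) < w q)"
proof -
  define f where "f k q = (\<Sum>p<n. fun_mat_pow n B k p q)" for k q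
  obtain K where K: "\<And>q. q < n \<Longrightarrow> f K q < 1"
    unfolding f_def using fun_mat_pow_column_sum_lt_1[OF n sr] by blast
  \<comment> \<open>\<open>w\<close> truncates the Neumann series \<open>\<Sum>\<^sub>k \<one>\<^sup>T B\<^sup>k\<close>; by telescoping, \<open>w B = w - \<one>\<^sup>T + \<one>\<^sup>T B\<^sup>K\<close>\<close>
  define w where "w q = (\<Sum>k<K. f k q)" for q
  have f0: "f 0 q = 1" if "q < n" for q
    unfolding f_def using that by simp
  have "K \<noteq> 0"
    using K[OF n] f0[OF n] by (cases K) auto
  have "1 \<le> w q" if "q < n" for q
  proof -
    have "f 0 q \<le> w q"
      unfolding w_def f_def using \<open>K \<noteq> 0\<close> fun_mat_pow_nonneg[OF nonneg that]
      by (intro member_le_sum sum_nonneg) auto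
    with f0[OF that] show ?thesis
      by simp
  qed
  moreover have "(\<Sum>p<n. w p * B p q) < w q" if "q < n" for q
  proof -
    have "(\<Sum>p<n. w p * B p q) = (\<Sum>p<n. \<Sum>k<K. \<Sum>p'<n. fun_mat_pow n B k p' p * B p q)"
      unfolding w_def f_def sum_distrib_right ..
    also have "\<dots> = (\<Sum>k<K. \<Sum>p'<n. \<Sum>p<n. fun_mat_pow n B k p' p * B p q)"
      by (subst sum.swap) (intro sum.cong refl sum.swap)
    also have "\<dots> = (\<Sum>k<K. f (Suc k) q)"
      unfolding f_def by simp
    also have "\<dots> = w q - f 0 q + f K q"
      using sum.lessThan_Suc_shift[of "\<lambda>k. f k q" K] sum.lessThan_Suc[of "\<lambda>k. f k q" K]
      unfolding w_def by linarith
    also have "\<dots> < w q"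
      using f0[OF that] K[OF that] by simp
    finally show ?thesis .
  qed
  ultimately show ?thesis
    by blast
qed

lemma finite_pos_lower_bound:
  fixes f :: "'a \<Rightarrow> real"
  assumes "finite A" "\<And>a. a \<in> A \<Longrightarrow> 0 < f a"
  obtains k where "0 < k" "\<And>a. a \<in> A \<Longrightarrow> k \<le> f a"
proof
  show "0 < Min (insert 1 (f ` A))"
    using assms by (subst Min_gr_iff) auto
  show "Min (insert 1 (f ` A)) \<le> f a" if "a \<in> A" for a
    using assms that by (intro Min_le) auto
qed

lemma dist_E0_nonneg: "0 \<le> dist_E0 P V b d s l i r"
  unfolding dist_E0_def by (intro sum_nonneg add_nonneg_nonneg abs_ge_zero)

lemma E0_GAS_in_Omega_of_exponential_bound:
  assumes K: "0 \<le> K" and c: "0 < c"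
    and bound: "\<And>S L I R t. is_solution P V b d eps gam beta S L I R \<Longrightarrow>
      in_Omega P V b d (S 0) (L 0) (I 0) (R 0) \<Longrightarrow> 0 \<le> t \<Longrightarrow>
      dist_E0 P V b d (S t) (L t) (I t) (R t) \<le> K * dist_E0 P V b d (S 0) (L 0) (I 0) (R 0) * exp (- c * t)"
  shows "E0_GAS_in_Omega P V b d eps gam beta"
  unfolding E0_GAS_in_Omega_def
proof (intro conjI allI impI)
  fix \<epsilon> :: real assume \<epsilon>: "0 < \<epsilon>"
  show "\<exists>\<delta>>0. \<forall>S L I R. is_solution P V b d eps gam beta S L I R \<longrightarrow>
      in_Omega P V b d (S 0) (L 0) (I 0) (R 0) \<longrightarrow>
      dist_E0 P V b d (S 0) (L 0) (I 0) (R 0) < \<delta> \<longrightarrow>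
      (\<forall>t\<ge>0. dist_E0 P V b d (S t) (L t) (I t) (R t) < \<epsilon>)"
  proof (intro exI[of _ "\<epsilon> / (K + 1)"] conjI allI impI)
    fix S L I R and t :: real
    assume sol: "is_solution P V b d eps gam beta S L I R"
      and \<Omega>: "in_Omega P V b d (S 0) (L 0) (I 0) (R 0)"
      and small: "dist_E0 P V b d (S 0) (L 0) (I 0) (R 0) < \<epsilon> / (K + 1)" and t: "0 \<le> t"
    have "dist_E0 P V b d (S t) (L t) (I t) (R t) \<le> K * dist_E0 P V b d (S 0) (L 0) (I 0) (R 0) * exp (- c * t)"
      by (rule bound[OF sol \<Omega> t])
    also have "\<dots> \<le> K * dist_E0 P V b d (S 0) (L 0) (I 0) (R 0)"
      using K c t by (intro mult_left_le mult_nonneg_nonneg dist_E0_nonneg) auto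
    also have "\<dots> \<le> K * (\<epsilon> / (K + 1))"
      using small K by (intro mult_left_mono) auto
    also have "\<dots> < \<epsilon>"
      using K \<epsilon> by (simp add: field_simps)
    finally show "dist_E0 P V b d (S t) (L t) (I t) (R t) < \<epsilon>" .
  qed (use \<epsilon> K in simp)
next
  fix S L I R
  assume sol: "is_solution P V b d eps gam beta S L I R"
    and \<Omega>: "in_Omega P V b d (S 0) (L 0) (I 0) (R 0)"
  define D where "D = dist_E0 P V b d (S 0) (L 0) (I 0) (R 0)"
  have lim: "((\<lambda>t. K * D * exp (- c * t)) \<longlongrightarrow> 0) at_top"
    using c by real_asymp
  show "((\<lambda>t. dist_E0 P V b d (S t) (L t) (I t) (R t)) \<longlongrightarrow> 0) at_top"
  proof (rule tendsto_sandwich[OF _ _ tendsto_const lim])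
    show "\<forall>\<^sub>F t in at_top. dist_E0 P V b d (S t) (L t) (I t) (R t)
        \<le> K * D * exp (- c * t)"
      using eventually_ge_at_top[of 0] unfolding D_def by eventually_elim (rule bound[OF sol \<Omega>])
  qed (simp add: dist_E0_nonneg)
qed

section \<open>Lyapunov weights for the infected compartments\<close>

locale multihost_model =
  fixes P V :: nat and b d :: "nat \<Rightarrow> real" and eps gam :: "nat \<Rightarrow> nat \<Rightarrow> real"
    and beta :: "nat \<Rightarrow> nat \<Rightarrow> nat \<Rightarrow> real"
  assumes P_pos: "0 < P"
    and b_pos: "p < P \<Longrightarrow> 0 < b p"
    and d_pos: "p < P \<Longrightarrow> 0 < d p"
    and eps_pos: "p < P \<Longrightarrow> v < V \<Longrightarrow> 0 < eps p v"
    and gam_pos: "p < P \<Longrightarrow> v < V \<Longrightarrow> 0 < gam p v"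
    and beta_nonneg: "p < P \<Longrightarrow> q < P \<Longrightarrow> v < V \<Longrightarrow> 0 \<le> beta p q v"
    and R0_lt_1: "R0 P V b d eps gam beta < 1"
begin

lemma S0_pos: "p < P \<Longrightarrow> 0 < S0 b d p"
  unfolding S0_def using b_pos d_pos by simp

definition ngm :: "nat \<Rightarrow> nat \<Rightarrow> nat \<Rightarrow> real" where
  "ngm v p q = beta p q v * eps q v * S0 b d p / ((eps q v + d q) * (gam q v + d q))"

lemma ngm_nonneg: "v < V \<Longrightarrow> p < P \<Longrightarrow> q < P \<Longrightarrow> 0 \<le> ngm v p q"
  unfolding ngm_def using beta_nonneg eps_pos S0_pos d_pos gam_pos
  by (intro divide_nonneg_pos mult_nonneg_nonneg mult_pos_pos add_pos_pos) (auto simp: less_imp_le)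

lemma ngm_subinvariant_weight:
  obtains W where "\<And>v q. v < V \<Longrightarrow> q < P \<Longrightarrow> 1 \<le> W v q"
    "\<And>v q. v < V \<Longrightarrow> q < P \<Longrightarrow> (\<Sum>p<P. W v p * ngm v p q) < W v q"
proof -
  have "\<exists>w. (\<forall>q<P. 1 \<le> w q) \<and> (\<forall>q<P. (\<Sum>p<P. w p * ngm v p q) < w q)" if v: "v < V" for v
  proof (rule subinvariant_weight_of_spectral_radius_lt_1[OF P_pos ngm_nonneg[OF v]])
    have "R0v P b d eps gam beta v \<le> R0 P V b d eps gam beta"
      unfolding R0_def using v by (intro Max_ge) auto
    with R0_lt_1 show "spectral_radius (mat P P (\<lambda>(p, q). complex_of_real (ngm v p q))) < 1"
      unfolding R0v_def Bmat_def ngm_def by simp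
  qed
  then have "\<forall>v\<in>{..<V}. \<exists>w. (\<forall>q<P. 1 \<le> w q) \<and> (\<forall>q<P. (\<Sum>p<P. w p * ngm v p q) < w q)"
    by blast
  from bchoice[OF this] obtain W
    where "\<forall>v\<in>{..<V}. (\<forall>q<P. 1 \<le> W v q) \<and> (\<forall>q<P. (\<Sum>p<P. W v p * ngm v p q) < W v q)"
    by blast
  then show ?thesis
    using that by blast
qed

lemma ngm_scaled:
  assumes "v < V" "q < P"
  shows "ngm v p q * ((eps q v + d q) * (gam q v + d q) / eps q v) = beta p q v * S0 b d p"
proof -
  define A where "A = (eps q v + d q) * (gam q v + d q)"
  have "eps q v \<noteq> 0" "A \<noteq> 0"
    using assms eps_pos d_pos gam_pos unfolding A_def by (auto simp: add_pos_pos less_imp_neq[symmetric])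
  then show ?thesis
    unfolding ngm_def A_def[symmetric] by (simp add: field_simps)
qed

lemma new_infections_le:
  assumes v: "v < V" and w: "\<And>p. p < P \<Longrightarrow> 0 \<le> w p"
    and s: "\<And>p. p < P \<Longrightarrow> s p \<le> S0 b d p" and i: "\<And>q. q < P \<Longrightarrow> 0 \<le> i q"
  shows "(\<Sum>p<P. w p * ((\<Sum>q<P. beta p q v * i q) * s p))
    \<le> (\<Sum>q<P. (\<Sum>p<P. w p * ngm v p q) * ((eps q v + d q) * (gam q v + d q) / eps q v) * i q)"
proof -
  have "(\<Sum>p<P. w p * ((\<Sum>q<P. beta p q v * i q) * s p)) \<le> (\<Sum>p<P. w p * ((\<Sum>q<P. beta p q v * i q) * S0 b d p))"
    using v w s i beta_nonneg by (intro sum_mono mult_left_mono sum_nonneg mult_nonneg_nonneg) auto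
  also have "\<dots> = (\<Sum>q<P. \<Sum>p<P. w p * (beta p q v * S0 b d p) * i q)"
    by (subst sum.swap) (simp add: sum_distrib_left sum_distrib_right mult_ac)
  also have "\<dots> = (\<Sum>q<P. \<Sum>p<P. w p * ngm v p q * ((eps q v + d q) * (gam q v + d q) / eps q v) * i q)"
  proof (intro sum.cong refl)
    fix p q assume "q \<in> {..<P}"
    then have "beta p q v * S0 b d p = ngm v p q * ((eps q v + d q) * (gam q v + d q) / eps q v)"
      using ngm_scaled[OF v] by simp
    then show "w p * (beta p q v * S0 b d p) * i q
        = w p * ngm v p q * ((eps q v + d q) * (gam q v + d q) / eps q v) * i q"
      by (simp add: mult.assoc)
  qed
  also have "\<dots> = (\<Sum>q<P. (\<Sum>p<P. w p * ngm v p q) * ((eps q v + d q) * (gam q v + d q) / eps q v) * i q)"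
    by (simp add: sum_distrib_right sum_divide_distrib)
  finally show ?thesis .
qed

text \<open>
  The derivative of \<open>\<Sum>\<^sub>p x\<^sub>p\<^sub>v L\<^sub>p\<^sub>v + y\<^sub>p\<^sub>v I\<^sub>p\<^sub>v\<close> along the equations for pathogen \<open>v\<close>,
  at a state with susceptibles \<open>s\<close>, latents \<open>l\<close> and infectives \<open>i\<close>.
\<close>

definition weighted_infected_deriv ::
    "(nat \<Rightarrow> nat \<Rightarrow> real) \<Rightarrow> (nat \<Rightarrow> nat \<Rightarrow> real) \<Rightarrow> nat \<Rightarrow> (nat \<Rightarrow> real) \<Rightarrow> (nat \<Rightarrow> real) \<Rightarrow> (nat \<Rightarrow> real) \<Rightarrow> real" where
  "weighted_infected_deriv x y v s l i = (\<Sum>p<P. x p v * ((\<Sum>q<P. beta p q v * i q) * s p - (eps p v + d p) * l p)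
      + y p v * (eps p v * l p - (gam p v + d p) * i p))"

lemma weighted_infected_deriv_le:
  assumes v: "v < V" and w: "\<And>p. p < P \<Longrightarrow> 0 \<le> w p"
    and s: "\<And>p. p < P \<Longrightarrow> s p \<le> S0 b d p" and i: "\<And>q. q < P \<Longrightarrow> 0 \<le> i q"
  defines "\<sigma> q \<equiv> \<Sum>p<P. w p * ngm v p q"
    \<comment> \<open>the choice of \<open>y\<close> makes the coefficients of both \<open>l q\<close> and \<open>i q\<close> multiples of \<open>w q - \<sigma> q\<close>\<close>
    and "y q \<equiv> (eps q v + d q) * (w q + (\<Sum>p<P. w p * ngm v p q)) / (2 * eps q v)"
  shows "weighted_infected_deriv (\<lambda>p _. w p) (\<lambda>p _. y p) v s l i
    \<le> - (\<Sum>q<P. (eps q v + d q) * (w q - \<sigma> q) / 2 * (l q + (gam q v + d q) / eps q v * i q))"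
proof -
  have "weighted_infected_deriv (\<lambda>p _. w p) (\<lambda>p _. y p) v s l i
      = (\<Sum>p<P. w p * ((\<Sum>q<P. beta p q v * i q) * s p))
        + (\<Sum>q<P. y q * (eps q v * l q - (gam q v + d q) * i q) - w q * (eps q v + d q) * l q)"
    unfolding weighted_infected_deriv_def by (simp add: sum.distrib [symmetric] algebra_simps)
  also have "\<dots> \<le> (\<Sum>q<P. \<sigma> q * ((eps q v + d q) * (gam q v + d q) / eps q v) * i q)
        + (\<Sum>q<P. y q * (eps q v * l q - (gam q v + d q) * i q) - w q * (eps q v + d q) * l q)"
    unfolding \<sigma>_def using new_infections_le[OF v w s i] by simp
  also have "\<dots> = - (\<Sum>q<P. (eps q v + d q) * (w q - \<sigma> q) / 2 * (l q + (gam q v + d q) / eps q v * i q))"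
    unfolding sum.distrib [symmetric] sum_negf [symmetric]
  proof (intro sum.cong refl)
    fix q assume "q \<in> {..<P}"
    then have "eps q v \<noteq> 0"
      using v eps_pos by (metis less_irrefl lessThan_iff)
    then show "\<sigma> q * ((eps q v + d q) * (gam q v + d q) / eps q v) * i q
        + (y q * (eps q v * l q - (gam q v + d q) * i q) - w q * (eps q v + d q) * l q)
      = - ((eps q v + d q) * (w q - \<sigma> q) / 2 * (l q + (gam q v + d q) / eps q v * i q))"
      unfolding y_def \<sigma>_def by (simp add: field_simps)
  qed
  finally show ?thesis .
qed

lemma infected_weights:
  obtains x y cL cI :: "nat \<Rightarrow> nat \<Rightarrow> real"
  where "\<And>p v. p < P \<Longrightarrow> v < V \<Longrightarrow> 0 < x p v \<and> 0 < y p v \<and> 0 < cL p v \<and> 0 < cI p v"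
    "\<And>v s l i. v < V \<Longrightarrow> (\<And>p. p < P \<Longrightarrow> s p \<le> S0 b d p \<and> 0 \<le> l p \<and> 0 \<le> i p) \<Longrightarrow>
       weighted_infected_deriv x y v s l i \<le> - (\<Sum>p<P. cL p v * l p + cI p v * i p)"
proof -
  obtain W where W1: "\<And>v q. v < V \<Longrightarrow> q < P \<Longrightarrow> 1 \<le> W v q"
    and W_sub: "\<And>v q. v < V \<Longrightarrow> q < P \<Longrightarrow> (\<Sum>p<P. W v p * ngm v p q) < W v q"
    using ngm_subinvariant_weight by blast
  define \<sigma> where "\<sigma> v q = (\<Sum>p<P. W v p * ngm v p q)" for v q
  define x where "x p v = W v p" for p v
  define y where "y p v = (eps p v + d p) * (W v p + \<sigma> v p) / (2 * eps p v)" for p v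
  define cL where "cL p v = (eps p v + d p) * (W v p - \<sigma> v p) / 2" for p v
  define cI where "cI p v = cL p v * ((gam p v + d p) / eps p v)" for p v
  have \<sigma>_nonneg: "0 \<le> \<sigma> v q" if "q < P" "v < V" for v q
    unfolding \<sigma>_def using W1[OF that(2)] ngm_nonneg[OF that(2)] that
    by (intro sum_nonneg mult_nonneg_nonneg) (auto intro: order_trans[OF zero_le_one])
  show ?thesis
  proof (rule that)
    show "0 < x p v \<and> 0 < y p v \<and> 0 < cL p v \<and> 0 < cI p v" if "p < P" "v < V" for p v
      unfolding x_def y_def cI_def cL_def
      using W1[OF that(2,1)] W_sub[OF that(2,1)] \<sigma>_nonneg[OF that]
        eps_pos[OF that] gam_pos[OF that] d_pos[OF that(1)]
      by (auto simp: \<sigma>_def intro!: divide_pos_pos mult_pos_pos add_pos_pos add_pos_nonneg)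
  next
    fix v and s l i :: "nat \<Rightarrow> real"
    assume v: "v < V" and state: "\<And>p. p < P \<Longrightarrow> s p \<le> S0 b d p \<and> 0 \<le> l p \<and> 0 \<le> i p"
    have "weighted_infected_deriv x y v s l i = weighted_infected_deriv (\<lambda>p _. W v p)
        (\<lambda>p _. (eps p v + d p) * (W v p + (\<Sum>q<P. W v q * ngm v q p)) / (2 * eps p v)) v s l i"
      unfolding weighted_infected_deriv_def x_def y_def \<sigma>_def ..
    also have "\<dots> \<le> - (\<Sum>p<P. cL p v * (l p + (gam p v + d p) / eps p v * i p))"
      unfolding cL_def \<sigma>_def
      by (rule weighted_infected_deriv_le[OF v])
        (use W1[OF v] state in \<open>auto intro: order_trans[OF zero_le_one]\<close>)
    also have "\<dots> = - (\<Sum>p<P. cL p v * l p + cI p v * i p)"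
      unfolding cI_def by (simp add: algebra_simps)
    finally show "weighted_infected_deriv x y v s l i \<le> - (\<Sum>p<P. cL p v * l p + cI p v * i p)" .
  qed
qed

lemma lyapunov_weights:
  obtains x y :: "nat \<Rightarrow> nat \<Rightarrow> real" and \<kappa> :: real
  where "0 < \<kappa>" "\<And>p v. p < P \<Longrightarrow> v < V \<Longrightarrow> 0 < x p v" "\<And>p v. p < P \<Longrightarrow> v < V \<Longrightarrow> 0 < y p v"
    "\<And>v s l i. v < V \<Longrightarrow> (\<And>p. p < P \<Longrightarrow> s p \<le> S0 b d p \<and> 0 \<le> l p \<and> 0 \<le> i p) \<Longrightarrow>
       weighted_infected_deriv x y v s l i \<le> - \<kappa> * (\<Sum>p<P. x p v * l p + y p v * i p)"
proof -
  obtain x y cL cI where pos: "\<And>p v. p < P \<Longrightarrow> v < V \<Longrightarrow> 0 < x p v \<and> 0 < y p v \<and> 0 < cL p v \<and> 0 < cI p v"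
    and infected: "\<And>v s l i. v < V \<Longrightarrow> (\<And>p. p < P \<Longrightarrow> s p \<le> S0 b d p \<and> 0 \<le> l p \<and> 0 \<le> i p) \<Longrightarrow>
       weighted_infected_deriv x y v s l i \<le> - (\<Sum>p<P. cL p v * l p + cI p v * i p)"
    by (rule infected_weights) blast
  define r where "r = (\<lambda>(p, v). min (cL p v / x p v) (cI p v / y p v))"
  obtain \<kappa> where \<kappa>: "0 < \<kappa>" and \<kappa>_le: "\<And>pv. pv \<in> {..<P} \<times> {..<V} \<Longrightarrow> \<kappa> \<le> r pv"
    by (rule finite_pos_lower_bound[of "{..<P} \<times> {..<V}" r]) (use pos in \<open>auto simp: r_def\<close>)
  show ?thesis
  proof (rule that[OF \<kappa>])
    fix v and s l i :: "nat \<Rightarrow> real"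
    assume v: "v < V" and state: "\<And>p. p < P \<Longrightarrow> s p \<le> S0 b d p \<and> 0 \<le> l p \<and> 0 \<le> i p"
    have "\<kappa> * (x p v * l p + y p v * i p) \<le> cL p v * l p + cI p v * i p" if p: "p < P" for p
    proof -
      have "\<kappa> * x p v \<le> cL p v" "\<kappa> * y p v \<le> cI p v"
        using \<kappa>_le[of "(p, v)"] pos[OF p v] p v by (auto simp: r_def pos_le_divide_eq)
      then show ?thesis
        using state[OF p] by (simp add: distrib_left add_mono mult_right_mono mult.assoc[symmetric])
    qed
    then have "\<kappa> * (\<Sum>p<P. x p v * l p + y p v * i p) \<le> (\<Sum>p<P. cL p v * l p + cI p v * i p)"
      unfolding sum_distrib_left by (intro sum_mono) auto
    with infected[OF v state]
    show "weighted_infected_deriv x y v s l i \<le> - \<kappa> * (\<Sum>p<P. x p v * l p + y p v * i p)"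
      by linarith
  qed (use pos in auto)
qed

end

section \<open>Solutions starting in \<open>\<Omega>\<close>\<close>

locale multihost_solution = multihost_model +
  fixes S :: "real \<Rightarrow> nat \<Rightarrow> real" and L I :: "real \<Rightarrow> nat \<Rightarrow> nat \<Rightarrow> real"
    and R :: "real \<Rightarrow> nat \<Rightarrow> real"
  assumes solution: "is_solution P V b d eps gam beta S L I R"
    and initial: "in_Omega P V b d (S 0) (L 0) (I 0) (R 0)"
begin

definition "dS t p = b p - ((\<Sum>q<P. \<Sum>v<V. beta p q v * I t q v) + d p) * S t p"
definition "dL t p v = (\<Sum>q<P. beta p q v * I t q v) * S t p - (eps p v + d p) * L t p v"
definition "dI t p v = eps p v * L t p v - (gam p v + d p) * I t p v"
definition "dR t p = (\<Sum>v<V. gam p v * I t p v) - d p * R t p"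

lemma has_deriv_S: "p < P \<Longrightarrow> 0 \<le> t \<Longrightarrow> ((\<lambda>\<tau>. S \<tau> p) has_real_derivative dS t p) (at t within {0..})"
  and has_deriv_L: "p < P \<Longrightarrow> v < V \<Longrightarrow> 0 \<le> t \<Longrightarrow> ((\<lambda>\<tau>. L \<tau> p v) has_real_derivative dL t p v) (at t within {0..})"
  and has_deriv_I: "p < P \<Longrightarrow> v < V \<Longrightarrow> 0 \<le> t \<Longrightarrow> ((\<lambda>\<tau>. I \<tau> p v) has_real_derivative dI t p v) (at t within {0..})"
  and has_deriv_R: "p < P \<Longrightarrow> 0 \<le> t \<Longrightarrow> ((\<lambda>\<tau>. R \<tau> p) has_real_derivative dR t p) (at t within {0..})"
  using solution unfolding is_solution_def dS_def dL_def dI_def dR_def by blast+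

lemma continuous_on_S: "p < P \<Longrightarrow> continuous_on {0..} (\<lambda>t. S t p)"
  and continuous_on_I: "p < P \<Longrightarrow> v < V \<Longrightarrow> continuous_on {0..} (\<lambda>t. I t p v)"
  by (auto simp: continuous_on_eq_continuous_within intro: DERIV_continuous has_deriv_S has_deriv_I)

lemma initial_nonneg:
  "p < P \<Longrightarrow> 0 \<le> S 0 p" "p < P \<Longrightarrow> 0 \<le> R 0 p"
  "p < P \<Longrightarrow> v < V \<Longrightarrow> 0 \<le> L 0 p v" "p < P \<Longrightarrow> v < V \<Longrightarrow> 0 \<le> I 0 p v"
  using initial unfolding in_Omega_def by auto

lemma S_nonneg:
  assumes p: "p < P" and t: "0 \<le> t"
  shows "0 \<le> S t p"
proof (rule cooperative_system_nonneg[where J = "{p}" and z = "\<lambda>_ \<tau>. S \<tau> p" and z' = "\<lambda>_ \<tau>. dS \<tau> p"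
      and a = "\<lambda>_ _ \<tau>. - ((\<Sum>q<P. \<Sum>v<V. beta p q v * I \<tau> q v) + d p)"])
  show "continuous_on {0..} (\<lambda>\<tau>. - ((\<Sum>q<P. \<Sum>v<V. beta p q v * I \<tau> q v) + d p))"
    by (intro continuous_intros continuous_on_I) auto
  show "(\<Sum>i\<in>{p}. - ((\<Sum>q<P. \<Sum>v<V. beta p q v * I \<tau> q v) + d p) * S \<tau> p) \<le> dS \<tau> p" for \<tau>
    using b_pos[OF p] by (simp add: dS_def algebra_simps)
qed (use p t has_deriv_S initial_nonneg in auto)

lemma L_I_nonneg:
  assumes p: "p < P" and v: "v < V" and t: "0 \<le> t"
  shows "0 \<le> L t p v \<and> 0 \<le> I t p v"
proof -
  \<comment> \<open>index \<open>(True, q, w)\<close> stands for \<open>L\<^sub>q\<^sub>w\<close> and \<open>(False, q, w)\<close> for \<open>I\<^sub>q\<^sub>w\<close>; \<open>a\<close> is the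
    coefficient matrix of the \<open>(L, I)\<close>-system, which is Metzler once \<open>S \<ge> 0\<close> is known\<close>
  define J where "J = (UNIV :: bool set) \<times> {..<P} \<times> {..<V}"
  define z where "z = (\<lambda>(k, q, w). if k then (\<lambda>\<tau>. L \<tau> q w) else (\<lambda>\<tau>. I \<tau> q w))"
  define z' where "z' = (\<lambda>(k, q, w). if k then (\<lambda>\<tau>. dL \<tau> q w) else (\<lambda>\<tau>. dI \<tau> q w))"
  define a :: "bool \<times> nat \<times> nat \<Rightarrow> bool \<times> nat \<times> nat \<Rightarrow> real \<Rightarrow> real" where
    "a j i = (case (j, i) of
       ((True, p, v), (True, q, w)) \<Rightarrow> (\<lambda>_. if w = v then if q = p then - (eps p v + d p) else 0 else 0)
     | ((True, p, v), (False, q, w)) \<Rightarrow> (\<lambda>\<tau>. (if w = v then beta p q v else 0) * S \<tau> p)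
     | ((False, p, v), (True, q, w)) \<Rightarrow> (\<lambda>_. if w = v then if q = p then eps p v else 0 else 0)
     | ((False, p, v), (False, q, w)) \<Rightarrow> (\<lambda>_. if w = v then if q = p then - (gam p v + d p) else 0 else 0))"
    for j i
  have if_times: "(if c then x else 0) * y = (if c then x * y else 0)" for c and x y :: real
    by simp
  have sum_J: "(\<Sum>i\<in>J. f i) = (\<Sum>q<P. \<Sum>w<V. f (True, q, w) + f (False, q, w))" for f :: "_ \<Rightarrow> real"
    unfolding J_def by (simp add: sum.cartesian_product' UNIV_bool sum.distrib)
  have rows: "(\<Sum>i\<in>J. a k i s * z i s) \<le> z' k s" if "k \<in> J" for k s
    using that unfolding sum_J
    by (auto simp: J_def a_def z_def z'_def dL_def dI_def sum.distrib if_times)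
      (simp_all add: sum_distrib_left algebra_simps)
  have cont: "continuous_on {0..} (a k i)" if "k \<in> J" "i \<in> J" for k i
    using that unfolding J_def a_def
    by (auto split: bool.splits intro!: continuous_intros continuous_on_S)
  have off_diag: "0 \<le> a k i s" if "k \<in> J" "i \<in> J" "i \<noteq> k" "0 \<le> s" for k i s
    using that eps_pos beta_nonneg S_nonneg unfolding J_def a_def
    by (auto split: bool.splits if_splits intro!: mult_nonneg_nonneg simp: less_imp_le)
  have der: "(z k has_real_derivative z' k s) (at s within {0..})" if "k \<in> J" "0 \<le> s" for k s
    using that has_deriv_L has_deriv_I unfolding J_def z_def z'_def by auto
  have init: "0 \<le> z k 0" if "k \<in> J" for k
    using that initial_nonneg unfolding J_def z_def by auto
  have "0 \<le> z k t" if "k \<in> J" for k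
    using cooperative_system_nonneg[of J z z' a, OF _ der init cont off_diag rows that t]
    unfolding J_def by simp
  from this[of "(True, p, v)"] this[of "(False, p, v)"] show ?thesis
    using p v unfolding J_def z_def by simp
qed

lemma R_nonneg:
  assumes p: "p < P" and t: "0 \<le> t"
  shows "0 \<le> R t p"
proof (rule cooperative_system_nonneg[where J = "{p}" and z = "\<lambda>_ \<tau>. R \<tau> p" and z' = "\<lambda>_ \<tau>. dR \<tau> p"
      and a = "\<lambda>_ _ _. - d p"])
  show "(\<Sum>i\<in>{p}. - d p * R \<tau> p) \<le> dR \<tau> p" if "0 \<le> \<tau>" for \<tau>
    using p that L_I_nonneg gam_pos by (auto simp: dR_def less_imp_le intro!: sum_nonneg)
qed (use p t has_deriv_R initial_nonneg in auto)

definition N :: "real \<Rightarrow> nat \<Rightarrow> real" where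
  "N t p = S t p + (\<Sum>v<V. L t p v + I t p v) + R t p"

lemma has_deriv_N:
  assumes p: "p < P" and t: "0 \<le> t"
  shows "((\<lambda>\<tau>. N \<tau> p) has_real_derivative b p - d p * N t p) (at t within {0..})"
proof -
  have "((\<lambda>\<tau>. N \<tau> p) has_real_derivative dS t p + (\<Sum>v<V. dL t p v + dI t p v) + dR t p) (at t within {0..})"
    unfolding N_def using p t by (intro derivative_intros has_deriv_S has_deriv_L has_deriv_I has_deriv_R) auto
  moreover have "dS t p + (\<Sum>v<V. dL t p v + dI t p v) + dR t p = b p - d p * N t p"
    unfolding dS_def dL_def dI_def dR_def N_def
    by (simp add: sum.distrib sum_subtractf sum_distrib_left sum_distrib_right sum.swap[of _ "{..<V}"]
        algebra_simps)
  ultimately show ?thesis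
    by simp
qed

lemma N_le_S0:
  assumes p: "p < P" and t: "0 \<le> t"
  shows "N t p \<le> S0 b d p"
proof -
  have "N t p - S0 b d p \<le> (N 0 p - S0 b d p) * exp (- d p * t)"
  proof (rule exp_decay_of_deriv_le[where f = "\<lambda>\<tau>. N \<tau> p - S0 b d p"])
    show "((\<lambda>\<tau>. N \<tau> p - S0 b d p) has_real_derivative b p - d p * N s p) (at s within {0..})" if "0 \<le> s" for s
      using has_deriv_N[OF p that] by (auto intro!: derivative_eq_intros)
    show "b p - d p * N s p \<le> - d p * (N s p - S0 b d p)" for s
      using d_pos[OF p] by (simp add: S0_def algebra_simps)
  qed (use t in auto)
  also have "\<dots> \<le> 0"
    using initial p unfolding in_Omega_def N_def S0_def by (intro mult_nonpos_nonneg) auto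
  finally show ?thesis
    by simp
qed

lemma S_le_S0:
  assumes p: "p < P" and t: "0 \<le> t"
  shows "S t p \<le> S0 b d p"
proof -
  have "0 \<le> (\<Sum>v<V. L t p v + I t p v) + R t p"
    using p t L_I_nonneg R_nonneg by (intro add_nonneg_nonneg sum_nonneg) auto
  then have "S t p \<le> N t p"
    unfolding N_def by simp
  with N_le_S0[OF p t] show ?thesis
    by simp
qed

definition infected_weight :: "(nat \<Rightarrow> nat \<Rightarrow> real) \<Rightarrow> (nat \<Rightarrow> nat \<Rightarrow> real) \<Rightarrow> real \<Rightarrow> real" where
  "infected_weight x y t = (\<Sum>p<P. \<Sum>v<V. x p v * L t p v + y p v * I t p v)"

definition lyapunov :: "(nat \<Rightarrow> nat \<Rightarrow> real) \<Rightarrow> (nat \<Rightarrow> nat \<Rightarrow> real) \<Rightarrow> real \<Rightarrow> real \<Rightarrow> real" where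
  "lyapunov x y \<mu> t = (\<Sum>p<P. S0 b d p - N t p) + (\<Sum>p<P. R t p) + \<mu> * infected_weight x y t"

definition lyapunov_deriv :: "(nat \<Rightarrow> nat \<Rightarrow> real) \<Rightarrow> (nat \<Rightarrow> nat \<Rightarrow> real) \<Rightarrow> real \<Rightarrow> real \<Rightarrow> real" where
  "lyapunov_deriv x y \<mu> t = (\<Sum>p<P. d p * (N t p - S0 b d p)) + (\<Sum>p<P. dR t p)
     + \<mu> * (\<Sum>v<V. weighted_infected_deriv x y v (S t) (\<lambda>p. L t p v) (\<lambda>p. I t p v))"

lemma has_deriv_lyapunov:
  assumes t: "0 \<le> t"
  shows "(lyapunov x y \<mu> has_real_derivative lyapunov_deriv x y \<mu> t) (at t within {0..})"
proof -
  have "(lyapunov x y \<mu> has_real_derivative (\<Sum>p<P. 0 - (b p - d p * N t p)) + (\<Sum>p<P. dR t p)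
      + \<mu> * (\<Sum>p<P. \<Sum>v<V. x p v * dL t p v + y p v * dI t p v)) (at t within {0..})"
    unfolding lyapunov_def infected_weight_def using t
    by (intro DERIV_add DERIV_diff DERIV_sum DERIV_cmult DERIV_const
        has_deriv_N has_deriv_R has_deriv_L has_deriv_I) auto
  moreover have "(\<Sum>p<P. 0 - (b p - d p * N t p)) = (\<Sum>p<P. d p * (N t p - S0 b d p))"
    using d_pos by (intro sum.cong refl) (simp add: S0_def field_simps less_imp_neq[symmetric])
  moreover have "(\<Sum>p<P. \<Sum>v<V. x p v * dL t p v + y p v * dI t p v)
      = (\<Sum>v<V. weighted_infected_deriv x y v (S t) (\<lambda>p. L t p v) (\<lambda>p. I t p v))"
    unfolding weighted_infected_deriv_def dL_def dI_def by (rule sum.swap)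
  ultimately show ?thesis
    unfolding lyapunov_deriv_def by simp
qed

lemma infected_weight_nonneg:
  assumes "\<And>p v. p < P \<Longrightarrow> v < V \<Longrightarrow> 0 \<le> x p v" "\<And>p v. p < P \<Longrightarrow> v < V \<Longrightarrow> 0 \<le> y p v"
    and "0 \<le> t"
  shows "0 \<le> infected_weight x y t"
  unfolding infected_weight_def using assms L_I_nonneg
  by (intro sum_nonneg add_nonneg_nonneg mult_nonneg_nonneg) auto

lemma susceptible_deriv_le:
  assumes dm: "\<And>p. p < P \<Longrightarrow> dm \<le> d p" and t: "0 \<le> t"
  shows "(\<Sum>p<P. d p * (N t p - S0 b d p)) \<le> - dm * (\<Sum>p<P. S0 b d p - N t p)"
proof -
  have "(\<Sum>p<P. d p * (N t p - S0 b d p)) \<le> (\<Sum>p<P. dm * (N t p - S0 b d p))"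
    using dm N_le_S0 t by (intro sum_mono mult_right_mono_neg) auto
  also have "\<dots> = - dm * (\<Sum>p<P. S0 b d p - N t p)"
    by (simp add: sum_distrib_left[symmetric] sum_subtractf algebra_simps)
  finally show ?thesis .
qed

lemma recovered_deriv_le:
  assumes x: "\<And>p v. p < P \<Longrightarrow> v < V \<Longrightarrow> 0 \<le> x p v"
    and \<kappa>: "0 \<le> \<kappa>" and \<mu>: "0 \<le> \<mu>" and dm: "\<And>p. p < P \<Longrightarrow> dm \<le> d p"
    and gam_le: "\<And>p v. p < P \<Longrightarrow> v < V \<Longrightarrow> gam p v \<le> \<mu> * (\<kappa> / 2) * y p v"
    and t: "0 \<le> t"
  shows "(\<Sum>p<P. dR t p) \<le> \<mu> * (\<kappa> / 2) * infected_weight x y t - dm * (\<Sum>p<P. R t p)"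
proof -
  have "(\<Sum>p<P. \<Sum>v<V. gam p v * I t p v) \<le> (\<Sum>p<P. \<Sum>v<V. \<mu> * (\<kappa> / 2) * (x p v * L t p v + y p v * I t p v))"
  proof (intro sum_mono)
    fix p v assume "p \<in> {..<P}" "v \<in> {..<V}"
    then have p: "p < P" and v: "v < V"
      by auto
    have "gam p v * I t p v \<le> \<mu> * (\<kappa> / 2) * y p v * I t p v"
      using L_I_nonneg[OF p v t] by (intro mult_right_mono gam_le p v) auto
    moreover have "0 \<le> \<mu> * (\<kappa> / 2) * x p v * L t p v"
      using x[OF p v] L_I_nonneg[OF p v t] \<mu> \<kappa> by simp
    ultimately show "gam p v * I t p v \<le> \<mu> * (\<kappa> / 2) * (x p v * L t p v + y p v * I t p v)"
      by (simp add: algebra_simps)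
  qed
  also have "\<dots> = \<mu> * (\<kappa> / 2) * infected_weight x y t"
    unfolding infected_weight_def by (simp only: sum_distrib_left)
  moreover have "dm * (\<Sum>p<P. R t p) \<le> (\<Sum>p<P. d p * R t p)"
    unfolding sum_distrib_left using dm R_nonneg t by (intro sum_mono mult_right_mono) auto
  ultimately show ?thesis
    unfolding dR_def by (simp add: sum_subtractf)
qed

lemma infected_deriv_le:
  assumes infected: "\<And>v s l i. v < V \<Longrightarrow> (\<And>p. p < P \<Longrightarrow> s p \<le> S0 b d p \<and> 0 \<le> l p \<and> 0 \<le> i p) \<Longrightarrow>
      weighted_infected_deriv x y v s l i \<le> - \<kappa> * (\<Sum>p<P. x p v * l p + y p v * i p)"
    and t: "0 \<le> t"
  shows "(\<Sum>v<V. weighted_infected_deriv x y v (S t) (\<lambda>p. L t p v) (\<lambda>p. I t p v)) \<le> - \<kappa> * infected_weight x y t"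
proof -
  have "(\<Sum>v<V. weighted_infected_deriv x y v (S t) (\<lambda>p. L t p v) (\<lambda>p. I t p v))
      \<le> (\<Sum>v<V. - \<kappa> * (\<Sum>p<P. x p v * L t p v + y p v * I t p v))"
    using infected S_le_S0 L_I_nonneg t by (intro sum_mono) auto
  also have "\<dots> = - \<kappa> * infected_weight x y t"
    unfolding infected_weight_def
    by (subst sum.swap) (simp only: sum_distrib_left mult_minus_left sum_negf)
  finally show ?thesis .
qed

lemma lyapunov_deriv_le:
  assumes x: "\<And>p v. p < P \<Longrightarrow> v < V \<Longrightarrow> 0 \<le> x p v" and y: "\<And>p v. p < P \<Longrightarrow> v < V \<Longrightarrow> 0 \<le> y p v"
    and infected: "\<And>v s l i. v < V \<Longrightarrow> (\<And>p. p < P \<Longrightarrow> s p \<le> S0 b d p \<and> 0 \<le> l p \<and> 0 \<le> i p) \<Longrightarrow>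
      weighted_infected_deriv x y v s l i \<le> - \<kappa> * (\<Sum>p<P. x p v * l p + y p v * i p)"
    and \<kappa>: "0 \<le> \<kappa>" and \<mu>: "0 \<le> \<mu>" and dm: "\<And>p. p < P \<Longrightarrow> dm \<le> d p"
    and gam_le: "\<And>p v. p < P \<Longrightarrow> v < V \<Longrightarrow> gam p v \<le> \<mu> * (\<kappa> / 2) * y p v"
    and t: "0 \<le> t"
  shows "lyapunov_deriv x y \<mu> t \<le> - min dm (\<kappa> / 2) * lyapunov x y \<mu> t"
proof -
  define A where "A = (\<Sum>p<P. S0 b d p - N t p)"
  define B where "B = (\<Sum>p<P. R t p)"
  define W where "W = infected_weight x y t"
  have A: "0 \<le> A" and B: "0 \<le> B" and W: "0 \<le> W"
    unfolding A_def B_def W_def using N_le_S0 R_nonneg infected_weight_nonneg[OF x y] t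
    by (auto intro!: sum_nonneg)
  have "(\<Sum>v<V. weighted_infected_deriv x y v (S t) (\<lambda>p. L t p v) (\<lambda>p. I t p v)) \<le> - \<kappa> * W"
    unfolding W_def by (rule infected_deriv_le) (use infected t in auto)
  then have "\<mu> * (\<Sum>v<V. weighted_infected_deriv x y v (S t) (\<lambda>p. L t p v) (\<lambda>p. I t p v)) \<le> \<mu> * (- \<kappa> * W)"
    using \<mu> by (rule mult_left_mono)
  moreover have "(\<Sum>p<P. d p * (N t p - S0 b d p)) \<le> - dm * A"
    unfolding A_def by (rule susceptible_deriv_le) (use dm t in auto)
  moreover have "(\<Sum>p<P. dR t p) \<le> \<mu> * (\<kappa> / 2) * W - dm * B"
    unfolding W_def B_def by (rule recovered_deriv_le) (use x \<kappa> \<mu> dm gam_le t in auto)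
  ultimately have "lyapunov_deriv x y \<mu> t \<le> - dm * A - dm * B - (\<kappa> / 2) * (\<mu> * W)"
    unfolding lyapunov_deriv_def by (simp add: algebra_simps)
  also have "\<dots> \<le> - min dm (\<kappa> / 2) * (A + B + \<mu> * W)"
  proof -
    have "min dm (\<kappa> / 2) * A \<le> dm * A" "min dm (\<kappa> / 2) * B \<le> dm * B"
        "min dm (\<kappa> / 2) * (\<mu> * W) \<le> (\<kappa> / 2) * (\<mu> * W)"
      using A B W \<mu> by (intro mult_right_mono min.cobounded1 min.cobounded2 mult_nonneg_nonneg; simp)+
    moreover have "- min dm (\<kappa> / 2) * (A + B + \<mu> * W)
        = - (min dm (\<kappa> / 2) * A) - min dm (\<kappa> / 2) * B - min dm (\<kappa> / 2) * (\<mu> * W)"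
      by (simp add: algebra_simps)
    ultimately show ?thesis
      by linarith
  qed
  finally show ?thesis
    unfolding lyapunov_def A_def B_def W_def .
qed

lemma dist_E0_eq:
  assumes t: "0 \<le> t"
  shows "dist_E0 P V b d (S t) (L t) (I t) (R t)
    = (\<Sum>p<P. S0 b d p - N t p) + 2 * (\<Sum>p<P. \<Sum>v<V. L t p v + I t p v) + 2 * (\<Sum>p<P. R t p)"
proof -
  have "\<bar>S t p - S0 b d p\<bar> + (\<Sum>v<V. \<bar>L t p v\<bar> + \<bar>I t p v\<bar>) + \<bar>R t p\<bar>
      = (S0 b d p - N t p) + 2 * (\<Sum>v<V. L t p v + I t p v) + 2 * R t p" if p: "p < P" for p
  proof -
    have "(\<Sum>v<V. \<bar>L t p v\<bar> + \<bar>I t p v\<bar>) = (\<Sum>v<V. L t p v + I t p v)"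
      using L_I_nonneg[OF p _ t] by (intro sum.cong) auto
    then show ?thesis
      using S_le_S0[OF p t] R_nonneg[OF p t] unfolding N_def by simp
  qed
  then show ?thesis
    unfolding dist_E0_def by (simp add: sum.distrib sum_distrib_left)
qed

lemma dist_E0_le_lyapunov:
  assumes m: "0 < m" "\<And>p v. p < P \<Longrightarrow> v < V \<Longrightarrow> m \<le> x p v \<and> m \<le> y p v"
    and \<mu>: "0 < \<mu>" and t: "0 \<le> t"
  shows "dist_E0 P V b d (S t) (L t) (I t) (R t) \<le> (2 + 2 / (m * \<mu>)) * lyapunov x y \<mu> t"
proof -
  define A where "A = (\<Sum>p<P. S0 b d p - N t p)"
  define B where "B = (\<Sum>p<P. R t p)"
  define C where "C = (\<Sum>p<P. \<Sum>v<V. L t p v + I t p v)"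
  define W where "W = infected_weight x y t"
  have A: "0 \<le> A" and B: "0 \<le> B"
    unfolding A_def B_def using N_le_S0 R_nonneg t by (auto intro!: sum_nonneg)
  have "m * C \<le> W"
    unfolding C_def W_def infected_weight_def sum_distrib_left
  proof (intro sum_mono)
    fix p v assume "p \<in> {..<P}" "v \<in> {..<V}"
    then show "m * (L t p v + I t p v) \<le> x p v * L t p v + y p v * I t p v"
      using m(2) L_I_nonneg t by (simp add: distrib_left add_mono mult_right_mono)
  qed
  then have "2 * C \<le> 2 / (m * \<mu>) * (\<mu> * W)"
    using m(1) \<mu> by (simp add: field_simps)
  moreover have "0 \<le> W"
    unfolding W_def using m t by (intro infected_weight_nonneg) (auto intro: order_trans[OF less_imp_le])
  moreover have "0 \<le> 2 / (m * \<mu>) * (A + B)"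
    using m(1) \<mu> A B by simp
  moreover have "(2 + 2 / (m * \<mu>)) * (A + B + \<mu> * W)
      = 2 * A + 2 * B + 2 * (\<mu> * W) + 2 / (m * \<mu>) * (A + B) + 2 / (m * \<mu>) * (\<mu> * W)"
    by (simp only: distrib_left distrib_right)
  ultimately have "A + 2 * C + 2 * B \<le> (2 + 2 / (m * \<mu>)) * (A + B + \<mu> * W)"
    using A \<mu> by (smt (verit) mult_nonneg_nonneg)
  then show ?thesis
    unfolding dist_E0_eq[OF t] lyapunov_def A_def B_def C_def W_def by (simp add: algebra_simps)
qed

lemma lyapunov_initial_le:
  assumes M: "0 \<le> M" "\<And>p v. p < P \<Longrightarrow> v < V \<Longrightarrow> x p v \<le> M \<and> y p v \<le> M" and \<mu>: "0 \<le> \<mu>"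
  shows "lyapunov x y \<mu> 0 \<le> (1 + \<mu> * M) * dist_E0 P V b d (S 0) (L 0) (I 0) (R 0)"
proof -
  define D1 where "D1 = (\<Sum>p<P. \<bar>S 0 p - S0 b d p\<bar>)"
  define D2 where "D2 = (\<Sum>p<P. \<Sum>v<V. \<bar>L 0 p v\<bar> + \<bar>I 0 p v\<bar>)"
  define D3 where "D3 = (\<Sum>p<P. \<bar>R 0 p\<bar>)"
  have D: "0 \<le> D1" "0 \<le> D2" "0 \<le> D3"
    unfolding D1_def D2_def D3_def by (intro sum_nonneg add_nonneg_nonneg abs_ge_zero)+
  have "(\<Sum>p<P. S0 b d p - N 0 p) \<le> D1"
    unfolding D1_def
  proof (intro sum_mono)
    fix p assume "p \<in> {..<P}"
    then have "0 \<le> (\<Sum>v<V. L 0 p v + I 0 p v) + R 0 p"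
      using initial_nonneg by (intro add_nonneg_nonneg sum_nonneg) auto
    moreover have "- (S 0 p - S0 b d p) \<le> \<bar>S 0 p - S0 b d p\<bar>"
      by (rule abs_ge_minus_self)
    ultimately show "S0 b d p - N 0 p \<le> \<bar>S 0 p - S0 b d p\<bar>"
      unfolding N_def by linarith
  qed
  moreover have "(\<Sum>p<P. R 0 p) \<le> D3"
    unfolding D3_def by (intro sum_mono) auto
  moreover have "infected_weight x y 0 \<le> M * D2"
    unfolding infected_weight_def D2_def sum_distrib_left distrib_left
    using M initial_nonneg by (intro sum_mono add_mono mult_mono) auto
  then have "\<mu> * infected_weight x y 0 \<le> \<mu> * (M * D2)"
    using \<mu> by (rule mult_left_mono)
  ultimately have "lyapunov x y \<mu> 0 \<le> D1 + D3 + \<mu> * (M * D2)"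
    unfolding lyapunov_def by linarith
  also have "\<dots> \<le> (1 + \<mu> * M) * (D1 + D2 + D3)"
    using D M \<mu> by (simp add: algebra_simps)
  finally show ?thesis
    unfolding dist_E0_def D1_def D2_def D3_def by (simp add: sum.distrib)
qed

lemma lyapunov_decay:
  assumes x: "\<And>p v. p < P \<Longrightarrow> v < V \<Longrightarrow> 0 \<le> x p v" and y: "\<And>p v. p < P \<Longrightarrow> v < V \<Longrightarrow> 0 \<le> y p v"
    and infected: "\<And>v s l i. v < V \<Longrightarrow> (\<And>p. p < P \<Longrightarrow> s p \<le> S0 b d p \<and> 0 \<le> l p \<and> 0 \<le> i p) \<Longrightarrow>
      weighted_infected_deriv x y v s l i \<le> - \<kappa> * (\<Sum>p<P. x p v * l p + y p v * i p)"
    and \<kappa>: "0 \<le> \<kappa>" and \<mu>: "0 \<le> \<mu>" and dm: "\<And>p. p < P \<Longrightarrow> dm \<le> d p"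
    and gam_le: "\<And>p v. p < P \<Longrightarrow> v < V \<Longrightarrow> gam p v \<le> \<mu> * (\<kappa> / 2) * y p v"
    and t: "0 \<le> t"
  shows "lyapunov x y \<mu> t \<le> lyapunov x y \<mu> 0 * exp (- min dm (\<kappa> / 2) * t)"
  using has_deriv_lyapunov lyapunov_deriv_le[OF x y infected \<kappa> \<mu> dm gam_le] t
  by (rule exp_decay_of_deriv_le) auto

end

context multihost_model
begin

lemma lyapunov_parameters:
  obtains x y :: "nat \<Rightarrow> nat \<Rightarrow> real" and \<kappa> \<mu> :: real
  where "0 < \<kappa>" "0 < \<mu>" "\<And>p v. p < P \<Longrightarrow> v < V \<Longrightarrow> 0 < x p v \<and> 0 < y p v"
    "\<And>v s l i. v < V \<Longrightarrow> (\<And>p. p < P \<Longrightarrow> s p \<le> S0 b d p \<and> 0 \<le> l p \<and> 0 \<le> i p) \<Longrightarrow>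
       weighted_infected_deriv x y v s l i \<le> - \<kappa> * (\<Sum>p<P. x p v * l p + y p v * i p)"
    "\<And>p v. p < P \<Longrightarrow> v < V \<Longrightarrow> gam p v \<le> \<mu> * (\<kappa> / 2) * y p v"
proof -
  obtain \<kappa> x y where \<kappa>: "0 < \<kappa>" and x: "\<And>p v. p < P \<Longrightarrow> v < V \<Longrightarrow> 0 < x p v"
    and y: "\<And>p v. p < P \<Longrightarrow> v < V \<Longrightarrow> 0 < y p v"
    and infected: "\<And>v s l i. v < V \<Longrightarrow> (\<And>p. p < P \<Longrightarrow> s p \<le> S0 b d p \<and> 0 \<le> l p \<and> 0 \<le> i p) \<Longrightarrow>
      weighted_infected_deriv x y v s l i \<le> - \<kappa> * (\<Sum>p<P. x p v * l p + y p v * i p)"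
    by (rule lyapunov_weights) blast
  have "bdd_above ((\<lambda>(p, v). gam p v / y p v) ` ({..<P} \<times> {..<V}))"
    by (rule bdd_above_finite) simp
  then obtain G where G: "\<And>p v. p < P \<Longrightarrow> v < V \<Longrightarrow> gam p v / y p v \<le> G"
    unfolding bdd_above_def by force
  \<comment> \<open>\<open>\<mu>\<close> is chosen so large that the decay of the infected weight absorbs the recovery rate\<close>
  define \<mu> where "\<mu> = 2 * max G 1 / \<kappa>"
  show ?thesis
  proof (rule that[OF \<kappa> _ _ infected])
    show "0 < \<mu>"
      unfolding \<mu>_def using \<kappa> by simp
    show "gam p v \<le> \<mu> * (\<kappa> / 2) * y p v" if "p < P" "v < V" for p v
      using G[OF that] y[OF that] that \<kappa> by (auto simp: \<mu>_def pos_divide_le_eq intro: order_trans)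
  qed (use x y in auto)
qed

lemma exponential_stability_estimate:
  obtains K c where "0 \<le> K" "0 < c"
    "\<And>S L I R t. is_solution P V b d eps gam beta S L I R \<Longrightarrow> in_Omega P V b d (S 0) (L 0) (I 0) (R 0) \<Longrightarrow>
      0 \<le> t \<Longrightarrow> dist_E0 P V b d (S t) (L t) (I t) (R t)
        \<le> K * dist_E0 P V b d (S 0) (L 0) (I 0) (R 0) * exp (- c * t)"
proof -
  obtain x y \<kappa> \<mu> where \<kappa>: "0 < \<kappa>" and \<mu>: "0 < \<mu>"
    and xy: "\<And>p v. p < P \<Longrightarrow> v < V \<Longrightarrow> 0 < x p v \<and> 0 < y p v"
    and infected: "\<And>v s l i. v < V \<Longrightarrow> (\<And>p. p < P \<Longrightarrow> s p \<le> S0 b d p \<and> 0 \<le> l p \<and> 0 \<le> i p) \<Longrightarrow>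
      weighted_infected_deriv x y v s l i \<le> - \<kappa> * (\<Sum>p<P. x p v * l p + y p v * i p)"
    and gam_le: "\<And>p v. p < P \<Longrightarrow> v < V \<Longrightarrow> gam p v \<le> \<mu> * (\<kappa> / 2) * y p v"
    by (rule lyapunov_parameters) blast
  obtain m where m: "0 < m" "\<And>pv. pv \<in> {..<P} \<times> {..<V} \<Longrightarrow> m \<le> (\<lambda>(p, v). min (x p v) (y p v)) pv"
    by (rule finite_pos_lower_bound[of "{..<P} \<times> {..<V}" "\<lambda>(p, v). min (x p v) (y p v)"]) (use xy in auto)
  obtain dm where dm: "0 < dm" "\<And>p. p \<in> {..<P} \<Longrightarrow> dm \<le> d p"
    by (rule finite_pos_lower_bound[of "{..<P}" d]) (use d_pos in auto)
  have "bdd_above ((\<lambda>(p, v). max (x p v) (y p v)) ` ({..<P} \<times> {..<V}))"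
    by (rule bdd_above_finite) simp
  then obtain M where M: "\<And>p v. p < P \<Longrightarrow> v < V \<Longrightarrow> max (x p v) (y p v) \<le> M"
    unfolding bdd_above_def by force
  show ?thesis
  proof (rule that[of "(2 + 2 / (m * \<mu>)) * (1 + \<mu> * max M 0)" "min dm (\<kappa> / 2)"])
    fix S L I R and t :: real
    assume "is_solution P V b d eps gam beta S L I R" "in_Omega P V b d (S 0) (L 0) (I 0) (R 0)"
      and t: "0 \<le> t"
    then interpret multihost_solution P V b d eps gam beta S L I R
      by unfold_locales
    have "dist_E0 P V b d (S t) (L t) (I t) (R t) \<le> (2 + 2 / (m * \<mu>)) * lyapunov x y \<mu> t"
      using m xy \<mu> t by (intro dist_E0_le_lyapunov) auto
    also have "\<dots> \<le> (2 + 2 / (m * \<mu>)) * (lyapunov x y \<mu> 0 * exp (- min dm (\<kappa> / 2) * t))"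
      using m \<mu> \<kappa> dm xy gam_le t
      by (intro mult_left_mono lyapunov_decay[OF _ _ infected]) (auto simp: less_imp_le)
    also have "\<dots> \<le> (2 + 2 / (m * \<mu>)) * ((1 + \<mu> * max M 0) * dist_E0 P V b d (S 0) (L 0) (I 0) (R 0)
        * exp (- min dm (\<kappa> / 2) * t))"
      using m \<mu> M by (intro mult_left_mono mult_right_mono lyapunov_initial_le)
        (auto simp: less_imp_le le_max_iff_disj)
    finally show "dist_E0 P V b d (S t) (L t) (I t) (R t) \<le> (2 + 2 / (m * \<mu>)) * (1 + \<mu> * max M 0)
        * dist_E0 P V b d (S 0) (L 0) (I 0) (R 0) * exp (- min dm (\<kappa> / 2) * t)"
      by (simp add: mult_ac)
  qed (use m \<mu> dm \<kappa> in auto)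
qed

end

theorem mainTheorem3:
  fixes P V :: nat and b d :: "nat \<Rightarrow> real" and eps gam :: "nat \<Rightarrow> nat \<Rightarrow> real"
    and beta :: "nat \<Rightarrow> nat \<Rightarrow> nat \<Rightarrow> real"
  assumes "P \<ge> 1" and "V \<ge> 1"
    and "\<forall>p<P. b p > 0 \<and> d p > 0"
    and "\<forall>p<P. \<forall>v<V. eps p v > 0 \<and> gam p v > 0"
    and "\<forall>p<P. \<forall>q<P. \<forall>v<V. beta p q v \<ge> 0"
    and "R0 P V b d eps gam beta < 1"
  shows "E0_GAS_in_Omega P V b d eps gam beta"
proof -
  interpret multihost_model P V b d eps gam beta
    using assms by unfold_locales auto
  show ?thesis
    by (rule exponential_stability_estimate, rule E0_GAS_in_Omega_of_exponential_bound; assumption)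
qed

end
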